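(* Let $n\geqslant 3$ and let $\lambda=(\lambda_1,\ldots,\lambda_s)$ be a partition of $n$ with $s\geqslant 2$ and $\lambda_1>\lambda_2$. Put $m=\lambda_2+\cdots+\lambda_s$. Let $t$ be a standard tableau of shape $\lambda$ with $n$ placed in the rightmost cell of its first row. Then the polytabloid $\mathbf{e}_t$ is an eigenvector of $J_n$ (acting on $M^\lambda$) with eigenvalue $n-m-1$, i.e. $J_n(\mathbf{e}_t)=(n-m-1)\mathbf{e}_t$.
   Context: For $\pi\in\mathrm{Sym}_n$ and a tableau $t$ of shape $\lambda$ (filling of the Young diagram with $1,\ldots,n$), $\pi(t)$ replaces each entry $x$ by $\pi(x)$. The $\lambda$-tabloid $\{t\}$ is the set of tableaux obtained from $t$ by permuting entries within rows; $M^\lambda$ is the complex vector space with basis the $\lambda$-tabloids, with $\mathrm{Sym}_n$ acting by $\pi\{t\}=\{\pi(t)\}$. $C_t$ is the column-stabilizer of $t$ and $\mathbf{e}_t=\sum_{\sigma\in C_t}\mathrm{sgn}(\sigma)\{\sigma(t)\}$. The Jucys–Murphy element $J_n=(1\ n)+(2\ n)+\cdots+(n-1\ n)$ acts on $M^\lambda$ via this action. A tableau is standard if its entries increase along rows and down columns. *)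

theory Defs
  imports Complex_Main "HOL-Combinatorics.Combinatorics"
begin

type_synonym tableau = "nat \<times> nat \<Rightarrow> nat"
type_synonym tabloid = "tableau set"

definition is_partition :: "nat list \<Rightarrow> nat \<Rightarrow> bool" where
  "is_partition lam n \<longleftrightarrow> sorted_wrt (\<ge>) lam \<and> (\<forall>x\<in>set lam. 0 < x) \<and> sum_list lam = n"

definition cells :: "nat list \<Rightarrow> (nat \<times> nat) set" where
  "cells lam = {(i, j). i < length lam \<and> j < lam ! i}"

definition is_tableau :: "nat list \<Rightarrow> nat \<Rightarrow> tableau \<Rightarrow> bool" where
  "is_tableau lam n t \<longleftrightarrow> bij_betw t (cells lam) {1..n} \<and> (\<forall>c. c \<notin> cells lam \<longrightarrow> t c = 0)"

definition is_standard :: "nat list \<Rightarrow> tableau \<Rightarrow> bool" where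
  "is_standard lam t \<longleftrightarrow>
     (\<forall>i j. (i, j) \<in> cells lam \<longrightarrow> (i, Suc j) \<in> cells lam \<longrightarrow> t (i, j) < t (i, Suc j)) \<and>
     (\<forall>i j. (i, j) \<in> cells lam \<longrightarrow> (Suc i, j) \<in> cells lam \<longrightarrow> t (i, j) < t (Suc i, j))"

definition tabloid_of :: "nat list \<Rightarrow> tableau \<Rightarrow> tabloid" where
  "tabloid_of lam t = {t \<circ> \<sigma> | \<sigma>. \<sigma> permutes cells lam \<and> (\<forall>c. fst (\<sigma> c) = fst c)}"

definition tabloid_act :: "(nat \<Rightarrow> nat) \<Rightarrow> tabloid \<Rightarrow> tabloid" where
  "tabloid_act \<pi> T = (\<lambda>s. \<pi> \<circ> s) ` T"

text \<open>Elements of M^lam are represented as coefficient functions on tabloids.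
  The permutation action is the linear extension of the action on tabloids.\<close>
definition M_act :: "(nat \<Rightarrow> nat) \<Rightarrow> (tabloid \<Rightarrow> complex) \<Rightarrow> (tabloid \<Rightarrow> complex)" where
  "M_act \<pi> v = (\<lambda>T. v (tabloid_act (inv \<pi>) T))"

definition col_stab :: "nat list \<Rightarrow> nat \<Rightarrow> tableau \<Rightarrow> (nat \<Rightarrow> nat) set" where
  "col_stab lam n t = {\<sigma>. \<sigma> permutes {1..n} \<and>
     (\<forall>c\<in>cells lam. \<sigma> (t c) \<in> t ` {c' \<in> cells lam. snd c' = snd c})}"

definition polytabloid :: "nat list \<Rightarrow> nat \<Rightarrow> tableau \<Rightarrow> (tabloid \<Rightarrow> complex)" where
  "polytabloid lam n t = (\<lambda>T. \<Sum>\<sigma>\<in>col_stab lam n t.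
      if tabloid_of lam (\<sigma> \<circ> t) = T then of_int (sign \<sigma>) else 0)"

definition JM_act :: "nat \<Rightarrow> (tabloid \<Rightarrow> complex) \<Rightarrow> (tabloid \<Rightarrow> complex)" where
  "JM_act n v = (\<lambda>T. \<Sum>k\<in>{1..<n}. M_act (Transposition.transpose k n) v T)"

end

theory Submission imports Defs begin

text \<open>Since the entry n is alone in its column, every \<sigma> in the column stabiliser fixes n, so
  (k n) \<sigma> = \<sigma> (\<sigma>\<inverse>(k) n) and J_n e_t becomes a sum, over the cells d \<noteq> e of the other entries,
  of the signed sums of the tabloids of \<sigma>((t d) n) t.  If d lies in the row of e, the tableau
  ((t d) n) t differs from t only inside that row and contributes e_t.  Otherwise the column of d
  meets the row of e in a cell d', and the transposition of the entries at d and d' lies in the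
  column stabiliser and fixes the tabloid of ((t d) n) t, so it pairs the terms with opposite
  signs and the contribution vanishes.  Hence the eigenvalue is the length of the first row
  minus one.\<close>

definition signed_tabloid_sum ::
    "nat list \<Rightarrow> (nat \<Rightarrow> nat) set \<Rightarrow> tableau \<Rightarrow> tabloid \<Rightarrow> complex" where
  "signed_tabloid_sum lam C s T =
     (\<Sum>\<sigma>\<in>C. if tabloid_of lam (\<sigma> \<circ> s) = T then of_int (sign \<sigma>) else 0)"

lemma polytabloid_eq_signed_tabloid_sum:
  "polytabloid lam n t = signed_tabloid_sum lam (col_stab lam n t) t"
  unfolding polytabloid_def signed_tabloid_sum_def by (rule refl)

lemma tabloid_of_comp: "tabloid_of lam (\<pi> \<circ> s) = tabloid_act \<pi> (tabloid_of lam s)"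
  unfolding tabloid_of_def tabloid_act_def by (auto simp: comp_assoc)

lemma tabloid_act_transpose_involution:
  "tabloid_act (transpose a b) (tabloid_act (transpose a b) X) = X"
  unfolding tabloid_act_def by (simp add: image_image comp_assoc[symmetric])

lemma tabloid_of_comp_transpose_same_row:
  assumes "c1 \<in> cells lam" "c2 \<in> cells lam" "fst c1 = fst c2"
  shows "tabloid_of lam (s \<circ> transpose c1 c2) = tabloid_of lam s"
proof -
  let ?r = "transpose c1 c2"
  have r_permutes: "?r permutes cells lam" using assms by (simp add: permutes_swap_id)
  have r_row: "fst (?r c) = fst c" for c using assms(3) by (simp add: transpose_def)
  show ?thesis
  proof
    show "tabloid_of lam (s \<circ> ?r) \<subseteq> tabloid_of lam s"
      unfolding tabloid_of_def
    proof clarify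
      fix \<sigma> assume "\<sigma> permutes cells lam" "\<forall>c. fst (\<sigma> c) = fst c"
      then show "\<exists>\<sigma>'. s \<circ> ?r \<circ> \<sigma> = s \<circ> \<sigma>' \<and> \<sigma>' permutes cells lam \<and> (\<forall>c. fst (\<sigma>' c) = fst c)"
        by (intro exI[of _ "?r \<circ> \<sigma>"]) (auto simp: comp_assoc r_row permutes_compose r_permutes)
    qed
    show "tabloid_of lam s \<subseteq> tabloid_of lam (s \<circ> ?r)"
      unfolding tabloid_of_def
    proof clarify
      fix \<sigma> assume "\<sigma> permutes cells lam" "\<forall>c. fst (\<sigma> c) = fst c"
      then show "\<exists>\<sigma>'. s \<circ> \<sigma> = s \<circ> ?r \<circ> \<sigma>' \<and> \<sigma>' permutes cells lam \<and> (\<forall>c. fst (\<sigma>' c) = fst c)"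
        by (intro exI[of _ "?r \<circ> \<sigma>"]) (auto simp: comp_assoc[symmetric] r_row permutes_compose r_permutes)
    qed
  qed
qed

lemma M_act_transpose_polytabloid:
  "M_act (transpose k m) (polytabloid lam n t) T =
   (\<Sum>\<sigma>\<in>col_stab lam n t. if tabloid_of lam (transpose k m \<circ> \<sigma> \<circ> t) = T then of_int (sign \<sigma>) else 0)"
proof -
  have "(tabloid_of lam (\<sigma> \<circ> t) = tabloid_act (inv (transpose k m)) T) =
        (tabloid_of lam (transpose k m \<circ> \<sigma> \<circ> t) = T)" for \<sigma>
    by (simp only: inv_transpose_eq comp_assoc tabloid_of_comp)
      (metis tabloid_act_transpose_involution)
  then show ?thesis unfolding M_act_def polytabloid_def by simp
qed

lemma signed_tabloid_sum_row_equivalent: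
  assumes "tabloid_of lam s' = tabloid_of lam s"
  shows "signed_tabloid_sum lam C s' = signed_tabloid_sum lam C s"
  using assms unfolding signed_tabloid_sum_def by (simp add: tabloid_of_comp)

text \<open>The sign-reversing involution \<sigma> \<mapsto> \<sigma> \<tau> pairs up the terms of the sum.\<close>
lemma signed_tabloid_sum_eq_0:
  assumes fin: "finite C" and perm: "\<And>\<sigma>. \<sigma> \<in> C \<Longrightarrow> permutation \<sigma>"
    and \<tau>_in: "\<tau> \<in> C" and closed: "\<And>\<sigma>. \<sigma> \<in> C \<Longrightarrow> \<sigma> \<circ> \<tau> \<in> C"
    and involution: "\<tau> \<circ> \<tau> = id" and odd: "sign \<tau> = -1"
    and fixes_tabloid: "tabloid_of lam (\<tau> \<circ> s) = tabloid_of lam s"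
  shows "signed_tabloid_sum lam C s T = 0"
proof -
  let ?F = "\<lambda>\<sigma>. if tabloid_of lam (\<sigma> \<circ> s) = T then (of_int (sign \<sigma>) :: complex) else 0"
  have bij: "bij_betw (\<lambda>\<sigma>. \<sigma> \<circ> \<tau>) C C"
    by (rule bij_betw_byWitness[where f'="\<lambda>\<sigma>. \<sigma> \<circ> \<tau>"]) (auto simp: comp_assoc involution closed)
  have "sum ?F C = (\<Sum>\<sigma>\<in>C. ?F (\<sigma> \<circ> \<tau>))" by (rule sum.reindex_bij_betw[symmetric, OF bij])
  also have "\<dots> = (\<Sum>\<sigma>\<in>C. - ?F \<sigma>)"
  proof (rule sum.cong)
    fix \<sigma> assume "\<sigma> \<in> C"
    then have "sign (\<sigma> \<circ> \<tau>) = - sign \<sigma>" using perm \<tau>_in odd by (simp add: sign_compose)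
    moreover have "tabloid_of lam (\<sigma> \<circ> \<tau> \<circ> s) = tabloid_of lam (\<sigma> \<circ> s)"
      by (simp add: comp_assoc tabloid_of_comp[of lam \<sigma>] fixes_tabloid)
    ultimately show "?F (\<sigma> \<circ> \<tau>) = - ?F \<sigma>" by simp
  qed simp
  also have "\<dots> = - sum ?F C" by (simp add: sum_negf)
  finally show ?thesis unfolding signed_tabloid_sum_def by simp
qed

lemma transpose_comp_fixed_point:
  assumes "bij \<sigma>" "\<sigma> m = m"
  shows "transpose (\<sigma> j) m \<circ> \<sigma> = \<sigma> \<circ> transpose j m"
proof -
  have "inv \<sigma> (\<sigma> k) = k" for k using assms(1) by (simp add: bij_is_inj inv_f_f)
  from this[of m] this[of j] show ?thesis
    using transpose_comp_eq[OF assms(1), of "\<sigma> j" "\<sigma> m"] assms(2) by simp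
qed

lemma is_tableau_nonzero: "is_tableau lam n t \<Longrightarrow> c \<in> cells lam \<Longrightarrow> t c \<in> {1..n}"
  unfolding is_tableau_def by (auto dest: bij_betwE)

lemma is_tableau_inj_on: "is_tableau lam n t \<Longrightarrow> inj_on t (cells lam)"
  unfolding is_tableau_def by (auto dest: bij_betw_imp_inj_on)

lemma is_tableau_transpose_entries:
  assumes t: "is_tableau lam n t" and "a \<in> cells lam" "b \<in> cells lam"
  shows "transpose (t a) (t b) \<circ> t = t \<circ> transpose a b"
proof
  fix x
  show "(transpose (t a) (t b) \<circ> t) x = (t \<circ> transpose a b) x"
  proof (cases "x \<in> cells lam")
    case True
    then show ?thesis using assms is_tableau_inj_on[OF t]
      by (auto simp: transpose_def inj_on_eq_iff)
  next
    case False
    then have "t x = 0" using t unfolding is_tableau_def by blast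
    moreover have "t a \<noteq> 0" "t b \<noteq> 0" using assms is_tableau_nonzero[OF t] by fastforce+
    ultimately show ?thesis using False assms by (auto simp: transpose_def)
  qed
qed

lemma is_tableau_comp_permutes:
  assumes t: "is_tableau lam n t" and \<pi>: "\<pi> permutes cells lam"
  shows "is_tableau lam n (t \<circ> \<pi>)"
  using t bij_betw_trans[OF permutes_imp_bij[OF \<pi>]] permutes_not_in[OF \<pi>]
  unfolding is_tableau_def by auto

lemma col_stab_transpose_same_column:
  assumes t: "is_tableau lam n t" and ab: "a \<in> cells lam" "b \<in> cells lam" "snd a = snd b"
  shows "transpose (t a) (t b) \<in> col_stab lam n t"
proof -
  have "transpose (t a) (t b) (t c) \<in> t ` {c' \<in> cells lam. snd c' = snd c}"
    if "c \<in> cells lam" for c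
  proof -
    have "transpose (t a) (t b) (t c) = t (transpose a b c)"
      using fun_cong[OF is_tableau_transpose_entries[OF t ab(1,2)], of c] by simp
    moreover have "transpose a b c \<in> cells lam" "snd (transpose a b c) = snd c"
      using ab that by (auto simp: transpose_def)
    ultimately show ?thesis by blast
  qed
  moreover have "transpose (t a) (t b) permutes {1..n}"
    using ab is_tableau_nonzero[OF t] by (intro permutes_swap_id) auto
  ultimately show ?thesis unfolding col_stab_def by blast
qed

lemma col_stab_comp:
  assumes "\<sigma> \<in> col_stab lam n t" "\<rho> \<in> col_stab lam n t"
  shows "\<sigma> \<circ> \<rho> \<in> col_stab lam n t"
proof -
  have "(\<sigma> \<circ> \<rho>) (t c) \<in> t ` {c' \<in> cells lam. snd c' = snd c}" if "c \<in> cells lam" for c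
  proof -
    from assms(2) that obtain c' where c': "c' \<in> cells lam" "snd c' = snd c" "\<rho> (t c) = t c'"
      unfolding col_stab_def by blast
    from assms(1) c'(1) have "\<sigma> (t c') \<in> t ` {c'' \<in> cells lam. snd c'' = snd c'}"
      unfolding col_stab_def by blast
    with c' show ?thesis by auto
  qed
  with assms show ?thesis unfolding col_stab_def by (auto intro: permutes_compose)
qed

lemma finite_col_stab: "finite (col_stab lam n t)"
  by (rule finite_subset[OF _ finite_permutations[of "{1..n}"]]) (auto simp: col_stab_def)

lemma col_stab_permutation: "\<sigma> \<in> col_stab lam n t \<Longrightarrow> permutation \<sigma>"
  unfolding col_stab_def using permutation_permutes by blast

locale isolated_max_cell =
  fixes lam :: "nat list" and n :: nat and t :: tableau and e :: "nat \<times> nat"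
  assumes tableau: "is_tableau lam n t"
    and e_cell: "e \<in> cells lam" and t_e: "t e = n"
    and alone_in_column: "\<And>c. c \<in> cells lam \<Longrightarrow> snd c = snd e \<Longrightarrow> c = e"
    and column_meets_row:
      "\<And>d. d \<in> cells lam \<Longrightarrow> \<exists>d'\<in>cells lam. fst d' = fst e \<and> snd d' = snd d"
begin

abbreviation "C \<equiv> col_stab lam n t"

lemma col_stab_fixes_n: "\<sigma> \<in> C \<Longrightarrow> \<sigma> n = n"
  using e_cell alone_in_column t_e unfolding col_stab_def by fastforce

lemma JM_act_polytabloid_cells:
  "JM_act n (polytabloid lam n t) T =
   (\<Sum>d\<in>cells lam - {e}. signed_tabloid_sum lam C (t \<circ> transpose d e) T)"
proof -
  have reindex_by_\<sigma>: "(\<Sum>k\<in>{1..<n}. f (transpose k n \<circ> \<sigma>)) = (\<Sum>j\<in>{1..<n}. f (\<sigma> \<circ> transpose j n))"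
    if "\<sigma> \<in> C" for \<sigma> and f :: "(nat \<Rightarrow> nat) \<Rightarrow> complex"
  proof -
    have perm: "\<sigma> permutes {1..n}" using that by (simp add: col_stab_def)
    have "\<sigma> ` {1..<n} = \<sigma> ` {1..n} - {\<sigma> n}"
      by (simp add: atLeastLessThan_eq_atLeastAtMost_diff image_set_diff[OF permutes_inj[OF perm]])
    then have "\<sigma> ` {1..<n} = {1..<n}"
      by (simp only: permutes_image[OF perm] col_stab_fixes_n[OF that]
          atLeastLessThan_eq_atLeastAtMost_diff)
    then have "bij_betw \<sigma> {1..<n} {1..<n}"
      by (simp add: bij_betw_def inj_on_subset[OF permutes_inj[OF perm] subset_UNIV])
    then have "(\<Sum>k\<in>{1..<n}. f (transpose k n \<circ> \<sigma>)) = (\<Sum>j\<in>{1..<n}. f (transpose (\<sigma> j) n \<circ> \<sigma>))"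
      by (rule sum.reindex_bij_betw[symmetric])
    then show ?thesis
      by (simp add: transpose_comp_fixed_point permutes_bij[OF perm] col_stab_fixes_n[OF that])
  qed
  have cells_to_entries: "bij_betw t (cells lam - {e}) {1..<n}"
    using bij_betw_DiffI[of t "cells lam" "{1..n}" "{e}" "{n}"] tableau e_cell t_e
      is_tableau_nonzero[OF tableau e_cell]
    unfolding is_tableau_def by (auto simp: atLeastLessThan_eq_atLeastAtMost_diff)
  have "JM_act n (polytabloid lam n t) T =
        (\<Sum>\<sigma>\<in>C. \<Sum>k\<in>{1..<n}. if tabloid_of lam (transpose k n \<circ> \<sigma> \<circ> t) = T then of_int (sign \<sigma>) else 0)"
    unfolding JM_act_def M_act_transpose_polytabloid by (rule sum.swap)
  also have "\<dots> = (\<Sum>\<sigma>\<in>C. \<Sum>j\<in>{1..<n}.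
      if tabloid_of lam (\<sigma> \<circ> transpose j n \<circ> t) = T then of_int (sign \<sigma>) else 0)"
    by (rule sum.cong[OF refl],
        rule reindex_by_\<sigma>[where f = "\<lambda>\<pi>. if tabloid_of lam (\<pi> \<circ> t) = T then _ else _"])
  also have "\<dots> = (\<Sum>j\<in>{1..<n}. signed_tabloid_sum lam C (transpose j n \<circ> t) T)"
    unfolding signed_tabloid_sum_def by (subst sum.swap) (simp add: comp_assoc)
  also have "\<dots> = (\<Sum>d\<in>cells lam - {e}. signed_tabloid_sum lam C (transpose (t d) (t e) \<circ> t) T)"
    using sum.reindex_bij_betw[OF cells_to_entries,
        of "\<lambda>j. signed_tabloid_sum lam C (transpose j n \<circ> t) T"] by (simp add: t_e)
  also have "\<dots> = (\<Sum>d\<in>cells lam - {e}. signed_tabloid_sum lam C (t \<circ> transpose d e) T)"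
    by (rule sum.cong) (simp_all add: is_tableau_transpose_entries[OF tableau _ e_cell])
  finally show ?thesis .
qed

lemma signed_tabloid_sum_same_row:
  assumes "d \<in> cells lam" "fst d = fst e"
  shows "signed_tabloid_sum lam C (t \<circ> transpose d e) = polytabloid lam n t"
  unfolding polytabloid_eq_signed_tabloid_sum
  using tabloid_of_comp_transpose_same_row[OF assms(1) e_cell assms(2)]
  by (rule signed_tabloid_sum_row_equivalent)

lemma signed_tabloid_sum_other_row:
  assumes d: "d \<in> cells lam" "fst d \<noteq> fst e"
  shows "signed_tabloid_sum lam C (t \<circ> transpose d e) T = 0"
proof -
  obtain d' where d': "d' \<in> cells lam" "fst d' = fst e" "snd d' = snd d"
    using column_meets_row[OF d(1)] by blast
  have "d' \<noteq> e" "d' \<noteq> d" using alone_in_column[OF d(1)] d d' by auto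
  define s where "s = t \<circ> transpose d e"
  define \<tau> where "\<tau> = transpose (t d') (t d)"
  have s_tableau: "is_tableau lam n s"
    unfolding s_def using d(1) e_cell by (intro is_tableau_comp_permutes tableau permutes_swap_id) auto
  have "\<tau> = transpose (s d') (s e)"
    using \<open>d' \<noteq> e\<close> \<open>d' \<noteq> d\<close> by (simp add: \<tau>_def s_def)
  then have "\<tau> \<circ> s = s \<circ> transpose d' e"
    using is_tableau_transpose_entries[OF s_tableau d'(1) e_cell] by simp
  then have fixes_tabloid: "tabloid_of lam (\<tau> \<circ> s) = tabloid_of lam s"
    using tabloid_of_comp_transpose_same_row[OF d'(1) e_cell d'(2)] by simp
  have \<tau>_in: "\<tau> \<in> C"
    unfolding \<tau>_def using col_stab_transpose_same_column[OF tableau d'(1) d(1) d'(3)] .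
  have closed: "\<sigma> \<circ> \<tau> \<in> C" if "\<sigma> \<in> C" for \<sigma> using col_stab_comp[OF that \<tau>_in] .
  have "t d' \<noteq> t d" using inj_onD[OF is_tableau_inj_on[OF tableau]] d d' \<open>d' \<noteq> d\<close> by blast
  then have odd: "sign \<tau> = -1" by (simp add: \<tau>_def sign_swap_id)
  have "\<tau> \<circ> \<tau> = id" by (simp add: \<tau>_def)
  from signed_tabloid_sum_eq_0[OF finite_col_stab col_stab_permutation \<tau>_in closed this odd
      fixes_tabloid]
  show ?thesis by (simp add: s_def)
qed

theorem JM_act_polytabloid:
  "JM_act n (polytabloid lam n t) =
   (\<lambda>T. of_nat (card {d \<in> cells lam. fst d = fst e} - 1) * polytabloid lam n t T)"
proof
  fix T
  have "finite (cells lam)"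
    using tableau bij_betw_finite unfolding is_tableau_def by blast
  have "JM_act n (polytabloid lam n t) T =
      (\<Sum>d\<in>cells lam - {e}. if fst d = fst e then polytabloid lam n t T else 0)"
    unfolding JM_act_polytabloid_cells
    by (rule sum.cong) (auto simp: signed_tabloid_sum_same_row signed_tabloid_sum_other_row)
  also have "\<dots> = of_nat (card {d \<in> cells lam - {e}. fst d = fst e}) * polytabloid lam n t T"
    using \<open>finite (cells lam)\<close> by (simp add: sum.inter_filter[symmetric])
  also have "{d \<in> cells lam - {e}. fst d = fst e} = {d \<in> cells lam. fst d = fst e} - {e}"
    by blast
  also have "card \<dots> = card {d \<in> cells lam. fst d = fst e} - 1"
    using \<open>finite (cells lam)\<close> e_cell by (intro card_Diff_singleton) auto
  finally show "JM_act n (polytabloid lam n t) T =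
      of_nat (card {d \<in> cells lam. fst d = fst e} - 1) * polytabloid lam n t T" .
qed

end

lemma is_partition_nth_antimono:
  assumes "is_partition lam n" "i \<le> j" "j < length lam"
  shows "lam ! j \<le> lam ! i"
  using assms unfolding is_partition_def
  by (cases "i = j") (auto simp: sorted_wrt_iff_nth_less)

lemma card_cells_row: "i < length lam \<Longrightarrow> card {d \<in> cells lam. fst d = i} = lam ! i"
proof -
  assume "i < length lam"
  then have "{d \<in> cells lam. fst d = i} = Pair i ` {..<lam ! i}" by (auto simp: cells_def)
  then show ?thesis by (simp add: card_image inj_on_def)
qed

lemma isolated_max_cell_last_of_first_row:
  assumes partition: "is_partition lam n" and "length lam \<ge> 2" and "lam ! 0 > lam ! 1"
    and "is_tableau lam n t" and "t (0, lam ! 0 - 1) = n"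
  shows "isolated_max_cell lam n t (0, lam ! 0 - 1)"
proof
  have row_le_0: "lam ! i \<le> lam ! 0" and row_lt_0: "1 \<le> i \<Longrightarrow> lam ! i < lam ! 0"
    if "i < length lam" for i
    using is_partition_nth_antimono[OF partition, of _ i] that assms(3) by fastforce+
  show "(0, lam ! 0 - 1) \<in> cells lam"
    using assms(2,3) by (simp add: cells_def del: length_greater_0_conv)
  show "c = (0, lam ! 0 - 1)" if "c \<in> cells lam" "snd c = snd (0, lam ! 0 - 1)" for c
  proof -
    have c: "c = (fst c, lam ! 0 - 1)" "fst c < length lam" "lam ! 0 - 1 < lam ! fst c"
      using that by (cases c, simp add: cells_def)+
    then have "\<not> 1 \<le> fst c" using row_lt_0[of "fst c"] by linarith
    with c show ?thesis by (simp add: prod_eq_iff)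
  qed
  show "\<exists>d'\<in>cells lam. fst d' = fst (0, lam ! 0 - 1) \<and> snd d' = snd d" if "d \<in> cells lam" for d
    using that row_le_0[of "fst d"] assms(2)
    by (intro bexI[of _ "(0, snd d)"]) (auto simp: cells_def)
qed (use assms(4,5) in simp_all)

theorem proposition3:
  fixes n :: nat and lam :: "nat list" and t :: tableau
  assumes "n \<ge> 3"
    and "is_partition lam n"
    and "length lam \<ge> 2"
    and "lam ! 0 > lam ! 1"
    and "is_tableau lam n t"
    and "is_standard lam t"
    and "t (0, lam ! 0 - 1) = n"
  shows "JM_act n (polytabloid lam n t)
         = (\<lambda>T. (of_nat n - of_nat (sum_list (tl lam)) - 1) * polytabloid lam n t T)"
proof -
  interpret isolated_max_cell lam n t "(0, lam ! 0 - 1)"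
    using isolated_max_cell_last_of_first_row assms(2-5,7) .
  have "n = lam ! 0 + sum_list (tl lam)"
    using assms(2,3) unfolding is_partition_def by (cases lam) auto
  moreover have "card {d \<in> cells lam. fst d = 0} = lam ! 0"
    using assms(3) by (intro card_cells_row) linarith
  ultimately show ?thesis
    using JM_act_polytabloid assms(4) by (simp add: of_nat_diff)
qed

end
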